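(* Given $0<\alpha\le\beta<\infty$ there are positive numbers $c_0=c_0(\alpha,\beta)$, $c_1=c_1(\alpha,\beta)$ such that for every Bernstein function $g$ with rate function $r=r[g]$, \[c_0\,r(t)\le|g(z)|\le c_1\,r(t)\] whenever $t>0$ and $\operatorname{Re}z>0$ satisfy $\alpha\le t\operatorname{Re}z\le t|z|\le\beta$.
   Context: A Bernstein function $g\sim(a,b,\mu)$ is $g(z)=a+bz+\int_{(0,\infty)}(1-e^{-sz})\mu(\mathrm ds)$ ($\operatorname{Re} z>0$) with $a,b\ge0$, $\mu$ positive Radon on $(0,\infty)$, $\int\frac{s}{1+s}\mu(\mathrm ds)<\infty$. Rate function $r[g](t):=\frac a2+\frac bt+\int_{(0,\infty)}\min(s/t,1)\mu(\mathrm ds)$, $t>0$. *)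

theory Defs
  imports "HOL-Analysis.Analysis"
begin

text \<open>A Levy triple (a, b, mu): a, b >= 0, mu a positive Radon measure on (0,inf)
  (represented as a Borel measure on the reals giving no mass to (-inf,0]),
  with finite integral of s/(1+s).\<close>
definition bernstein_triple :: "real \<Rightarrow> real \<Rightarrow> real measure \<Rightarrow> bool" where
  "bernstein_triple a b \<mu> \<longleftrightarrow>
     a \<ge> 0 \<and> b \<ge> 0 \<and> sets \<mu> = sets borel \<and>
     emeasure \<mu> {..0} = 0 \<and>
     (\<forall>K. compact K \<and> K \<subseteq> {0<..} \<longrightarrow> emeasure \<mu> K < \<infinity>) \<and>
     (\<integral>\<^sup>+ s. ennreal (s / (1 + s)) \<partial>\<mu>) < \<infinity>"

definition bernstein_fun :: "real \<Rightarrow> real \<Rightarrow> real measure \<Rightarrow> complex \<Rightarrow> complex" where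
  "bernstein_fun a b \<mu> z =
     complex_of_real a + complex_of_real b * z +
     (\<integral> s. (1 - exp (- (complex_of_real s * z))) \<partial>\<mu>)"

definition rate_fun :: "real \<Rightarrow> real \<Rightarrow> real measure \<Rightarrow> real \<Rightarrow> real" where
  "rate_fun a b \<mu> t = a / 2 + b / t + (\<integral> s. min (s / t) 1 \<partial>\<mu>)"

end

theory Submission
  imports Defs
begin

text \<open>
  The whole argument rests on two pointwise estimates for the kernel \<open>1 - e^{-w}\<close>
  with \<open>Re w \<ge> 0\<close>: the upper bound \<open>|1 - e^{-w}| \<le> min(|w|, 2)\<close> and, for real
  \<open>v \<ge> 0\<close>, the lower bound \<open>1 - e^{-v} \<ge> min(v, 1)/2\<close>.  Scaled to \<open>w = sz\<close> they give
  \<open>|1 - e^{-sz}| \<le> max(2, \<beta>) min(s/t, 1)\<close> when \<open>t|z| \<le> \<beta>\<close>, and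
  \<open>Re(1 - e^{-sz}) \<ge> min(\<alpha>, 1)/2 \<cdot> min(s/t, 1)\<close> when \<open>\<alpha> \<le> t Re z\<close>.
  Since \<open>min(s/t, 1) \<le> C s/(1+s)\<close>, the Levy condition makes both integrands
  integrable, and integrating the pointwise bounds yields
  \<open>|g(z)| \<le> max(2, \<beta>) r(t)\<close> (triangle inequality) and
  \<open>min(\<alpha>, 1)/2 \<cdot> r(t) \<le> Re g(z) \<le> |g(z)|\<close>.  The theorem follows with
  \<open>c\<^sub>0 = min(\<alpha>, 1)/2\<close> and \<open>c\<^sub>1 = max(2, \<beta>)\<close>.
\<close>

text \<open>On the closed right half-plane \<open>e^{-w}\<close> is 1-Lipschitz, since its derivative
  has modulus \<open>e^{-Re w} \<le> 1\<close>.\<close>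
lemma norm_one_minus_exp_le_norm:
  fixes w :: complex
  assumes "Re w \<ge> 0"
  shows "cmod (1 - exp (- w)) \<le> cmod w"
proof -
  have "norm ((\<lambda>u. exp (- u)) 0 - (\<lambda>u. exp (- u)) w) \<le> 1 * norm (0 - w)"
  proof (rule field_differentiable_bound[OF convex_halfspace_Re_ge[of 0]])
    fix u :: complex assume "u \<in> {x. 0 \<le> Re x}"
    then show "((\<lambda>u. exp (- u)) has_field_derivative (- exp (- u))) (at u within {x. 0 \<le> Re x})"
      and "norm (- exp (- u)) \<le> 1"
      by (auto intro!: derivative_eq_intros simp: norm_exp)
  qed (use assms in auto)
  then show ?thesis by simp
qed

lemma norm_one_minus_exp_le_2:
  fixes w :: complex
  assumes "Re w \<ge> 0"
  shows "cmod (1 - exp (- w)) \<le> 2"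
proof -
  have "cmod (1 - exp (- w)) \<le> cmod 1 + cmod (exp (- w))" by (rule norm_triangle_ineq4)
  also have "cmod (exp (- w)) \<le> 1" using assms by (simp add: norm_exp)
  finally show ?thesis by simp
qed

text \<open>Lower bound on the real axis, via \<open>1 - e^{-v} \<ge> v/(1+v)\<close>.\<close>
lemma one_minus_exp_ge_min:
  fixes v :: real
  assumes "v \<ge> 0"
  shows "min v 1 / 2 \<le> 1 - exp (- v)"
proof -
  have "1 + v \<le> exp v" by (rule exp_ge_add_one_self)
  then have "exp (- v) \<le> 1 / (1 + v)" using assms
    by (simp add: exp_minus divide_simps)
  then have "v / (1 + v) \<le> 1 - exp (- v)" using assms
    by (simp add: divide_simps) (simp add: algebra_simps)
  moreover have "min v 1 / 2 \<le> v / (1 + v)" using assms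
    by (auto simp: divide_simps min_def intro!: mult_left_mono)
  ultimately show ?thesis by linarith
qed

lemma kernel_upper_bound:
  fixes z :: complex and s t \<beta> :: real
  assumes "s > 0" "t > 0" "Re z \<ge> 0" "t * cmod z \<le> \<beta>"
  shows "cmod (1 - exp (- (complex_of_real s * z))) \<le> max 2 \<beta> * min (s / t) 1"
proof -
  have Re_nonneg: "Re (complex_of_real s * z) \<ge> 0" using assms by simp
  show ?thesis
  proof (cases "s / t \<le> 1")
    case True
    have "cmod (1 - exp (- (complex_of_real s * z))) \<le> s * cmod z"
      using norm_one_minus_exp_le_norm[OF Re_nonneg] assms by (simp add: norm_mult)
    also have "\<dots> = (s / t) * (t * cmod z)" using assms by simp
    also have "\<dots> \<le> (s / t) * max 2 \<beta>" using assms by (intro mult_left_mono) auto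
    finally show ?thesis using True by (simp add: mult.commute)
  next
    case False
    then show ?thesis using norm_one_minus_exp_le_2[OF Re_nonneg] by simp
  qed
qed

lemma kernel_lower_bound:
  fixes z :: complex and s t \<alpha> :: real
  assumes "s > 0" "t > 0" "\<alpha> > 0" "\<alpha> \<le> t * Re z"
  shows "min \<alpha> 1 / 2 * min (s / t) 1 \<le> Re (1 - exp (- (complex_of_real s * z)))"
proof -
  have "\<alpha> * (s / t) \<le> (t * Re z) * (s / t)"
    using assms by (intro mult_right_mono) auto
  also have "\<dots> = s * Re z" using assms by simp
  moreover have "min \<alpha> 1 * min (s / t) 1 \<le> \<alpha> * (s / t)"
    using assms by (intro mult_mono) auto
  moreover have "min \<alpha> 1 * min (s / t) 1 \<le> 1"
    using assms by (intro mult_le_one) auto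
  ultimately have "min \<alpha> 1 * min (s / t) 1 \<le> min (s * Re z) 1" by simp
  also have "\<dots> / 2 \<le> 1 - exp (- (s * Re z))"
    using assms zero_less_mult_iff[of t "Re z"] by (intro one_minus_exp_ge_min) simp
  also have "\<dots> \<le> Re (1 - exp (- (complex_of_real s * z)))"
    using abs_Re_le_cmod[of "exp (- (complex_of_real s * z))"] by (simp add: norm_exp)
  finally show ?thesis by simp
qed

lemma bernstein_triple_AE_pos:
  assumes "bernstein_triple a b \<mu>"
  shows "AE s in \<mu>. s > 0"
proof -
  have sets: "sets \<mu> = sets borel" and null: "emeasure \<mu> {..0} = 0"
    using assms by (auto simp: bernstein_triple_def)
  have "{..0::real} \<in> null_sets \<mu>" using null by (intro null_setsI) (simp_all add: sets)
  moreover have "{x \<in> space \<mu>. \<not> 0 < x} \<subseteq> {..0}" by auto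
  ultimately show ?thesis by (rule AE_I')
qed

lemma bernstein_triple_borel_measurable:
  assumes "bernstein_triple a b \<mu>" "f \<in> borel_measurable borel"
  shows "f \<in> borel_measurable \<mu>"
  using assms by (simp add: bernstein_triple_def cong: measurable_cong_sets)

lemma bernstein_triple_integrable_levy:
  assumes "bernstein_triple a b \<mu>"
  shows "integrable \<mu> (\<lambda>s. s / (1 + s))"
proof (rule integrableI_nonneg)
  show "(\<lambda>s. s / (1 + s)) \<in> borel_measurable \<mu>"
    using assms by (rule bernstein_triple_borel_measurable) measurable
  show "AE s in \<mu>. 0 \<le> s / (1 + s)"
    using bernstein_triple_AE_pos[OF assms] by eventually_elim auto
  show "(\<integral>\<^sup>+ s. ennreal (s / (1 + s)) \<partial>\<mu>) < \<infinity>"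
    using assms by (simp add: bernstein_triple_def)
qed

lemma rate_kernel_le_levy_weight:
  fixes s t :: real
  assumes "s \<ge> 0" "t > 0"
  shows "min (s / t) 1 \<le> 2 * max (1 / t) 1 * (s / (1 + s))"
proof (cases "s \<le> 1")
  case True
  have "s / t = s * (1 / t)" by simp
  also have "\<dots> \<le> s * max (1 / t) 1" using assms by (intro mult_left_mono) auto
  also have "\<dots> \<le> 2 * (s / (1 + s)) * max (1 / t) 1"
  proof (intro mult_right_mono)
    have "s * (1 + s) \<le> s * 2" using True assms by (intro mult_left_mono) auto
    then show "s \<le> 2 * (s / (1 + s))" using assms by (simp add: divide_simps)
  qed simp
  finally show ?thesis by (simp add: mult_ac)
next
  case False
  have "1 \<le> 2 * (s / (1 + s))" using False by (simp add: divide_simps)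
  also have "\<dots> \<le> 2 * max (1 / t) 1 * (s / (1 + s))"
    using assms by (intro mult_right_mono) auto
  finally show ?thesis by simp
qed

lemma integrable_rate_kernel:
  assumes "bernstein_triple a b \<mu>" "t > 0"
  shows "integrable \<mu> (\<lambda>s. min (s / t) 1)"
proof (rule Bochner_Integration.integrable_bound)
  show "integrable \<mu> (\<lambda>s. 2 * max (1 / t) 1 * (s / (1 + s)))"
    using bernstein_triple_integrable_levy[OF assms(1)] by (rule integrable_mult_right)
  show "(\<lambda>s. min (s / t) 1) \<in> borel_measurable \<mu>"
    using assms(1) by (rule bernstein_triple_borel_measurable) measurable
  show "AE s in \<mu>. norm (min (s / t) 1) \<le> norm (2 * max (1 / t) 1 * (s / (1 + s)))"
    using bernstein_triple_AE_pos[OF assms(1)]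
    by eventually_elim (use assms(2) rate_kernel_le_levy_weight in auto)
qed

lemma integrable_bernstein_kernel:
  assumes "bernstein_triple a b \<mu>" "Re z \<ge> 0"
  shows "integrable \<mu> (\<lambda>s. 1 - exp (- (complex_of_real s * z)))"
proof (rule Bochner_Integration.integrable_bound)
  show "integrable \<mu> (\<lambda>s. max 2 (cmod z) * min (s / 1) 1)"
    using integrable_rate_kernel[OF assms(1), of 1] by simp
  show "(\<lambda>s. 1 - exp (- (complex_of_real s * z))) \<in> borel_measurable \<mu>"
    using assms(1) by (rule bernstein_triple_borel_measurable) measurable
  show "AE s in \<mu>. norm (1 - exp (- (complex_of_real s * z)))
      \<le> norm (max 2 (cmod z) * min (s / 1) 1)"
    using bernstein_triple_AE_pos[OF assms(1)]
  proof eventually_elim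
    case (elim s)
    then show ?case using kernel_upper_bound[of s 1 z "cmod z"] assms(2) by simp
  qed
qed

lemma bernstein_fun_upper_bound:
  assumes triple: "bernstein_triple a b \<mu>"
    and "t > 0" "Re z \<ge> 0" "t * cmod z \<le> \<beta>"
  shows "cmod (bernstein_fun a b \<mu> z) \<le> max 2 \<beta> * rate_fun a b \<mu> t"
proof -
  define c where "c = max 2 \<beta>"
  define K where "K = (\<lambda>s::real. 1 - exp (- (complex_of_real s * z)))"
  define M where "M = (\<lambda>s::real. min (s / t) 1)"
  have ab: "a \<ge> 0" "b \<ge> 0" using triple by (auto simp: bernstein_triple_def)
  have "cmod (integral\<^sup>L \<mu> K) \<le> (\<integral>s. cmod (K s) \<partial>\<mu>)"
    by (rule integral_norm_bound)
  also have "\<dots> \<le> (\<integral>s. c * M s \<partial>\<mu>)"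
  proof (rule integral_mono_AE)
    show "integrable \<mu> (\<lambda>s. cmod (K s))"
      unfolding K_def using integrable_bernstein_kernel[OF triple assms(3)] by simp
    show "integrable \<mu> (\<lambda>s. c * M s)"
      unfolding M_def using integrable_rate_kernel[OF triple assms(2)] by simp
    show "AE s in \<mu>. cmod (K s) \<le> c * M s"
      using bernstein_triple_AE_pos[OF triple]
    proof eventually_elim
      case (elim s)
      show ?case using kernel_upper_bound[OF elim assms(2-4)] by (simp add: K_def M_def c_def)
    qed
  qed
  finally have integral_part: "cmod (integral\<^sup>L \<mu> K) \<le> c * integral\<^sup>L \<mu> M" by simp
  have "cmod z \<le> \<beta> / t" using assms by (simp add: pos_le_divide_eq mult.commute)
  also have "\<dots> \<le> c / t" using assms by (intro divide_right_mono) (auto simp: c_def)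
  finally have "b * cmod z \<le> b * (c / t)" using ab(2) by (rule mult_left_mono)
  then have drift_part: "b * cmod z \<le> c * (b / t)" by (simp add: field_simps)
  have killing_part: "a \<le> c * (a / 2)"
    using ab mult_right_mono[of 2 c "a / 2"] by (simp add: c_def)
  have "cmod (bernstein_fun a b \<mu> z)
      = cmod (complex_of_real a + complex_of_real b * z + integral\<^sup>L \<mu> K)"
    by (simp add: bernstein_fun_def K_def)
  also have "\<dots> \<le> cmod (complex_of_real a) + cmod (complex_of_real b * z) + cmod (integral\<^sup>L \<mu> K)"
    using norm_triangle_ineq[of "complex_of_real a + complex_of_real b * z" "integral\<^sup>L \<mu> K"]
      norm_triangle_ineq[of "complex_of_real a" "complex_of_real b * z"] by linarith
  also have "\<dots> = a + b * cmod z + cmod (integral\<^sup>L \<mu> K)" using ab by (simp add: norm_mult)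
  also have "\<dots> \<le> c * (a / 2) + c * (b / t) + c * integral\<^sup>L \<mu> M"
    using integral_part drift_part killing_part by linarith
  also have "\<dots> = c * rate_fun a b \<mu> t" by (simp add: rate_fun_def M_def distrib_left)
  finally show ?thesis by (simp add: c_def)
qed

lemma bernstein_fun_lower_bound:
  assumes triple: "bernstein_triple a b \<mu>"
    and "t > 0" "\<alpha> > 0" "\<alpha> \<le> t * Re z"
  shows "min \<alpha> 1 / 2 * rate_fun a b \<mu> t \<le> cmod (bernstein_fun a b \<mu> z)"
proof -
  define c where "c = min \<alpha> 1 / 2"
  define K where "K = (\<lambda>s::real. 1 - exp (- (complex_of_real s * z)))"
  define M where "M = (\<lambda>s::real. min (s / t) 1)"
  have ab: "a \<ge> 0" "b \<ge> 0" using triple by (auto simp: bernstein_triple_def)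
  have Re_z: "Re z \<ge> 0" using assms zero_less_mult_iff[of t "Re z"] by linarith
  have int_K: "integrable \<mu> K"
    unfolding K_def using integrable_bernstein_kernel[OF triple Re_z] .
  have "c * integral\<^sup>L \<mu> M = (\<integral>s. c * M s \<partial>\<mu>)" by simp
  also have "\<dots> \<le> (\<integral>s. Re (K s) \<partial>\<mu>)"
  proof (rule integral_mono_AE)
    show "integrable \<mu> (\<lambda>s. c * M s)"
      unfolding M_def using integrable_rate_kernel[OF triple assms(2)] by simp
    show "integrable \<mu> (\<lambda>s. Re (K s))" using int_K by simp
    show "AE s in \<mu>. c * M s \<le> Re (K s)"
      using bernstein_triple_AE_pos[OF triple]
    proof eventually_elim
      case (elim s)
      show ?case using kernel_lower_bound[OF elim assms(2-4)] by (simp add: K_def M_def c_def)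
    qed
  qed
  also have "\<dots> = Re (integral\<^sup>L \<mu> K)" using int_K by simp
  finally have integral_part: "c * integral\<^sup>L \<mu> M \<le> Re (integral\<^sup>L \<mu> K)" .
  have "c \<le> \<alpha>" using assms by (simp add: c_def)
  then have "c / t \<le> Re z" using assms by (simp add: pos_divide_le_eq mult.commute)
  then have "b * (c / t) \<le> b * Re z" using ab(2) by (rule mult_left_mono)
  then have drift_part: "c * (b / t) \<le> b * Re z" by (simp add: field_simps)
  have "c * (a / 2) \<le> 1 * (a / 2)" using ab by (intro mult_right_mono) (auto simp: c_def)
  then have killing_part: "c * (a / 2) \<le> a" using ab by simp
  have "c * rate_fun a b \<mu> t = c * (a / 2) + c * (b / t) + c * integral\<^sup>L \<mu> M"
    by (simp add: rate_fun_def M_def distrib_left)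
  also have "\<dots> \<le> a + b * Re z + Re (integral\<^sup>L \<mu> K)"
    using integral_part drift_part killing_part by linarith
  also have "\<dots> = Re (bernstein_fun a b \<mu> z)" by (simp add: bernstein_fun_def K_def)
  also have "\<dots> \<le> cmod (bernstein_fun a b \<mu> z)" by (rule complex_Re_le_cmod)
  finally show ?thesis by (simp add: c_def)
qed

text \<open>Combine both bounds with \<open>c\<^sub>0 = min(\<alpha>, 1)/2\<close> and \<open>c\<^sub>1 = max(2, \<beta>)\<close>.\<close>
theorem proposition4p2:
  fixes \<alpha> \<beta> :: real
  assumes "0 < \<alpha>" and "\<alpha> \<le> \<beta>"
  shows "\<exists>c0 c1. c0 > 0 \<and> c1 > 0 \<and>
    (\<forall>a b \<mu>. bernstein_triple a b \<mu> \<longrightarrow>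
      (\<forall>t z. t > 0 \<and> Re z > 0 \<and> \<alpha> \<le> t * Re z \<and> t * Re z \<le> t * cmod z \<and> t * cmod z \<le> \<beta> \<longrightarrow>
         c0 * rate_fun a b \<mu> t \<le> cmod (bernstein_fun a b \<mu> z) \<and>
         cmod (bernstein_fun a b \<mu> z) \<le> c1 * rate_fun a b \<mu> t))"
proof (intro exI conjI allI impI)
  show "min \<alpha> 1 / 2 > 0" and "max 2 \<beta> > 0" using assms by auto
  fix a b \<mu> t and z :: complex
  assume triple: "bernstein_triple a b \<mu>"
    and tz: "t > 0 \<and> Re z > 0 \<and> \<alpha> \<le> t * Re z \<and> t * Re z \<le> t * cmod z \<and> t * cmod z \<le> \<beta>"
  show "min \<alpha> 1 / 2 * rate_fun a b \<mu> t \<le> cmod (bernstein_fun a b \<mu> z)"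
    using bernstein_fun_lower_bound[OF triple] tz assms(1) by simp
  show "cmod (bernstein_fun a b \<mu> z) \<le> max 2 \<beta> * rate_fun a b \<mu> t"
    using bernstein_fun_upper_bound[OF triple] tz by simp
qed

end
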